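(* Let $q\in L^1_{\mathrm{loc}}(\mathbb R)$, $z_1\in\mathbb C\setminus\mathbb R$, and let $\Psi(z_1,\cdot)=(\psi_1,\psi_2)^\top$ be a $z_1$-wave function associated with $q$ satisfying $\int_{\mathbb R}\|\Psi(z_1,x)\|_{\mathbb C^2}^{-2}dx<\infty$. Let $q^{(1)}_{z_1}=q+4\,\mathrm{Im}(z_1)\psi_1\overline{\psi_2}\|\Psi(z_1,\cdot)\|_{\mathbb C^2}^{-2}$. Then $z_1$ and $\overline{z_1}$ are eigenvalues of $D(q^{(1)}_{z_1})$ of geometric multiplicity one, with eigenfunctions $$\Phi^{(1)}(z_1,x)=\mathrm{Im}(z_1)\|\Psi(z_1,x)\|_{\mathbb C^2}^{-2}\mathcal K\Psi(z_1,x),\qquad \mathcal K\Phi^{(1)}(z_1,x)=-\mathrm{Im}(z_1)\|\Psi(z_1,x)\|_{\mathbb C^2}^{-2}\Psi(z_1,x),$$ i.e. both belong to $\mathrm{dom}(D(q^{(1)}_{z_1}))$ and $D(q^{(1)}_{z_1})\Phi^{(1)}(z_1)=z_1\Phi^{(1)}(z_1)$, $D(q^{(1)}_{z_1})\mathcal K\Phi^{(1)}(z_1)=\overline{z_1}\mathcal K\Phi^{(1)}(z_1)$.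
   Context: Let $q\in L^1_{\mathrm{loc}}(\mathbb R)$. For $z\in\mathbb C$, a $z$-wave function associated with $q$ is a function $\Psi(z,\cdot)=(\psi_1(z,\cdot),\psi_2(z,\cdot))^\top\in AC_{\mathrm{loc}}(\mathbb R)^2$, not identically zero, with $\psi_1'=-iz\psi_1+q\psi_2$, $\psi_2'=iz\psi_2-\overline{q}\psi_1$ a.e.; equivalently $M(q)\Psi=z\Psi$ with $M(q)=i\begin{pmatrix}\frac{d}{dx}&-q\\-\overline q&-\frac{d}{dx}\end{pmatrix}$. For $r\in L^1_{\mathrm{loc}}(\mathbb R)$, $D(r)$ is the maximal operator $F\mapsto M(r)F$ in $L^2(\mathbb R)^2$ on $\{F\in L^2(\mathbb R)^2\cap AC_{\mathrm{loc}}(\mathbb R)^2: M(r)F\in L^2(\mathbb R)^2\}$. $\mathcal K(a,b)^\top=(\overline b,-\overline a)^\top$ pointwise. A wave function never vanishes, so $q^{(1)}_{z_1}$ is well defined and in $L^1_{\mathrm{loc}}(\mathbb R)$. *)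

theory Defs
  imports "HOL-Analysis.Analysis"
begin

definition AC_on_ivl :: "real \<Rightarrow> real \<Rightarrow> (real \<Rightarrow> 'a::real_normed_vector) \<Rightarrow> bool" where
  "AC_on_ivl a b f \<longleftrightarrow>
     (\<forall>e>0. \<exists>d>0. \<forall>(n::nat) (u::nat \<Rightarrow> real) (v::nat \<Rightarrow> real).
        (\<forall>i<n. a \<le> u i \<and> u i \<le> v i \<and> v i \<le> b) \<and>
        (\<forall>i<n. \<forall>j<n. i \<noteq> j \<longrightarrow> v i \<le> u j \<or> v j \<le> u i) \<and>
        (\<Sum>i<n. v i - u i) < d
        \<longrightarrow> (\<Sum>i<n. norm (f (v i) - f (u i))) < e)"

definition AC_loc :: "(real \<Rightarrow> 'a::real_normed_vector) \<Rightarrow> bool" where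
  "AC_loc f \<longleftrightarrow> (\<forall>a b. AC_on_ivl a b f)"

definition L1_loc :: "(real \<Rightarrow> complex) \<Rightarrow> bool" where
  "L1_loc q \<longleftrightarrow> (\<forall>a b. set_integrable lborel {a..b} q)"

text \<open>Square integrable C^2-valued functions (norm on complex \<times> complex is the Euclidean norm).\<close>
definition L2 :: "(real \<Rightarrow> complex \<times> complex) \<Rightarrow> bool" where
  "L2 F \<longleftrightarrow> F \<in> borel_measurable lborel \<and> integrable lborel (\<lambda>x. (norm (F x))\<^sup>2)"

text \<open>Pointwise action of M(r) on F at x, given the derivative d = F'(x).\<close>
definition Mop :: "(real \<Rightarrow> complex) \<Rightarrow> (real \<Rightarrow> complex \<times> complex) \<Rightarrow> real
                    \<Rightarrow> complex \<times> complex \<Rightarrow> complex \<times> complex" where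
  "Mop r F x d = (\<i> * (fst d - r x * snd (F x)), \<i> * (- cnj (r x) * fst (F x) - snd d))"

definition cscale :: "complex \<Rightarrow> complex \<times> complex \<Rightarrow> complex \<times> complex" where
  "cscale c v = (c * fst v, c * snd v)"

definition Kop :: "complex \<times> complex \<Rightarrow> complex \<times> complex" where
  "Kop v = (cnj (snd v), - cnj (fst v))"

definition wave_function :: "(real \<Rightarrow> complex) \<Rightarrow> complex \<Rightarrow> (real \<Rightarrow> complex \<times> complex) \<Rightarrow> bool" where
  "wave_function q z \<Psi> \<longleftrightarrow> AC_loc \<Psi> \<and> (\<exists>x. \<Psi> x \<noteq> 0) \<and>
     (AE x in lborel. \<exists>d. (\<Psi> has_vector_derivative d) (at x) \<and>
         d = (- \<i> * z * fst (\<Psi> x) + q x * snd (\<Psi> x),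
              \<i> * z * snd (\<Psi> x) - cnj (q x) * fst (\<Psi> x)))"

text \<open>Graph of the maximal operator D(r): F \<in> dom D(r) and D(r) F = G (as elements of L^2).\<close>
definition D_graph :: "(real \<Rightarrow> complex) \<Rightarrow> (real \<Rightarrow> complex \<times> complex) \<Rightarrow> (real \<Rightarrow> complex \<times> complex) \<Rightarrow> bool" where
  "D_graph r F G \<longleftrightarrow> L2 F \<and> AC_loc F \<and> L2 G \<and>
     (AE x in lborel. \<exists>d. (F has_vector_derivative d) (at x) \<and> Mop r F x d = G x)"

definition D_dom :: "(real \<Rightarrow> complex) \<Rightarrow> (real \<Rightarrow> complex \<times> complex) \<Rightarrow> bool" where
  "D_dom r F \<longleftrightarrow> (\<exists>G. D_graph r F G)"

definition eigenfunction :: "(real \<Rightarrow> complex) \<Rightarrow> complex \<Rightarrow> (real \<Rightarrow> complex \<times> complex) \<Rightarrow> bool" where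
  "eigenfunction r z F \<longleftrightarrow> D_graph r F (\<lambda>x. cscale z (F x)) \<and> \<not> (AE x in lborel. F x = 0)"

definition simple_eigenvalue_with :: "(real \<Rightarrow> complex) \<Rightarrow> complex \<Rightarrow> (real \<Rightarrow> complex \<times> complex) \<Rightarrow> bool" where
  "simple_eigenvalue_with r z F \<longleftrightarrow> eigenfunction r z F \<and>
     (\<forall>G. D_graph r G (\<lambda>x. cscale z (G x)) \<longrightarrow> (\<exists>c. AE x in lborel. G x = cscale c (F x)))"

end

theory Submission
  imports Defs
begin

(*
  Where \<Psi> is differentiable, the quotient rule together with
  (|\<Psi>|\<^sup>2)' = 2 Im z1 (|\<psi>\<^sub>1|\<^sup>2 - |\<psi>\<^sub>2|\<^sup>2) shows by direct computation that
  \<Phi> = Im z1 |\<Psi>|\<^sup>-\<^sup>2 K\<Psi> solves the Dirac system of q1 at z1, and |\<Phi>|\<^sup>2 = (Im z1)\<^sup>2 / |\<Psi>|\<^sup>2 is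
  integrable; K maps solutions at z to solutions at conj z.  For multiplicity one: the
  Wronskian of two solutions is constant, and for two L\<^sup>2 solutions it is integrable, hence zero.
  So a second eigenfunction G agrees with a multiple c \<Phi> at one point, and G - c \<Phi> vanishes
  identically because solutions are unique: (|F|\<^sup>2)' is bounded by 2 |Im z| |F|\<^sup>2, and Gronwall
  applies.  Solutions are only absolutely continuous, so constancy and monotonicity from a.e.
  derivatives are derived from Luzin's property (N).
*)

section \<open>Absolutely continuous functions\<close>

definition nonoverlapping_subintervals ::
    "real \<Rightarrow> real \<Rightarrow> nat \<Rightarrow> (nat \<Rightarrow> real) \<Rightarrow> (nat \<Rightarrow> real) \<Rightarrow> bool" where
  "nonoverlapping_subintervals a b n u v \<longleftrightarrow>
     (\<forall>i<n. a \<le> u i \<and> u i \<le> v i \<and> v i \<le> b) \<and>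
     (\<forall>i<n. \<forall>j<n. i \<noteq> j \<longrightarrow> v i \<le> u j \<or> v j \<le> u i)"

lemma AC_on_ivl_iff:
  "AC_on_ivl a b f \<longleftrightarrow> (\<forall>e>0. \<exists>d>0. \<forall>n u v.
     nonoverlapping_subintervals a b n u v \<and> (\<Sum>i<n. v i - u i) < d
       \<longrightarrow> (\<Sum>i<n. norm (f (v i) - f (u i))) < e)"
  unfolding AC_on_ivl_def nonoverlapping_subintervals_def by (simp only: conj_assoc)

lemma AC_on_ivlI:
  assumes "\<And>e. e > 0 \<Longrightarrow> \<exists>d>0. \<forall>n u v.
     nonoverlapping_subintervals a b n u v \<and> (\<Sum>i<n. v i - u i) < d
       \<longrightarrow> (\<Sum>i<n. norm (f (v i) - f (u i))) < e"
  shows "AC_on_ivl a b f"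
  unfolding AC_on_ivl_iff using assms by blast

lemma AC_on_ivlE:
  assumes "AC_on_ivl a b f" "e > 0"
  obtains d where "d > 0"
    "\<And>n u v. nonoverlapping_subintervals a b n u v \<Longrightarrow> (\<Sum>i<n. v i - u i) < d
       \<Longrightarrow> (\<Sum>i<n. norm (f (v i) - f (u i))) < e"
  using assms unfolding AC_on_ivl_iff by meson

lemma nonoverlapping_subintervals_enumerate:
  assumes "finite I"
    and inside: "\<And>K. K \<in> I \<Longrightarrow> a \<le> u K \<and> u K \<le> v K \<and> v K \<le> b"
    and apart: "\<And>K K'. K \<in> I \<Longrightarrow> K' \<in> I \<Longrightarrow> K \<noteq> K' \<Longrightarrow> v K \<le> u K' \<or> v K' \<le> u K"
  obtains h where "bij_betw h {..<card I} I"
    "nonoverlapping_subintervals a b (card I) (u \<circ> h) (v \<circ> h)"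
proof -
  obtain h where h: "bij_betw h {..<card I} I"
    using ex_bij_betw_nat_finite[OF \<open>finite I\<close>] by (auto simp: atLeast0LessThan)
  have in_I: "h i \<in> I" if "i < card I" for i
    using bij_betwE[OF h] that by blast
  have distinct: "h i \<noteq> h j" if "i < card I" "j < card I" "i \<noteq> j" for i j
    using bij_betw_imp_inj_on[OF h] that unfolding inj_on_def by blast
  have "nonoverlapping_subintervals a b (card I) (u \<circ> h) (v \<circ> h)"
    unfolding nonoverlapping_subintervals_def o_def
    using inside[OF in_I] apart[OF in_I in_I distinct] by blast
  with h show thesis by (rule that)
qed

lemma AC_on_ivl_continuous_on:
  assumes "AC_on_ivl a b f"
  shows "continuous_on {a..b} f"
  unfolding continuous_on_iff
proof (intro ballI allI impI)
  fix x e :: real assume x: "x \<in> {a..b}" and "0 < e"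
  obtain d where "d > 0" and small:
    "\<And>n u v. nonoverlapping_subintervals a b n u v \<Longrightarrow> (\<Sum>i<n. v i - u i) < d
       \<Longrightarrow> (\<Sum>i<n. norm (f (v i) - f (u i))) < e"
    using AC_on_ivlE[OF assms \<open>0 < e\<close>] by blast
  show "\<exists>d>0. \<forall>y\<in>{a..b}. dist y x < d \<longrightarrow> dist (f y) (f x) < e"
  proof (intro exI[of _ d] conjI ballI impI \<open>d > 0\<close>)
    fix y assume "y \<in> {a..b}" "dist y x < d"
    then have "(\<Sum>i<1::nat. norm (f (max x y) - f (min x y))) < e"
      using x small[of 1 "\<lambda>_. min x y" "\<lambda>_. max x y"]
      by (auto simp: nonoverlapping_subintervals_def dist_real_def)
    then show "dist (f y) (f x) < e"
      by (auto simp: dist_norm norm_minus_commute max_def min_def split: if_splits)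
  qed
qed

lemma AC_on_ivl_dominated2:
  fixes f :: "real \<Rightarrow> 'a::real_normed_vector" and g :: "real \<Rightarrow> 'b::real_normed_vector"
    and h :: "real \<Rightarrow> 'c::real_normed_vector"
  assumes f: "AC_on_ivl a b f" and g: "AC_on_ivl a b g"
    and dominated: "\<And>u v. a \<le> u \<Longrightarrow> u \<le> v \<Longrightarrow> v \<le> b \<Longrightarrow>
      norm (h v - h u) \<le> C * (norm (f v - f u) + norm (g v - g u))"
  shows "AC_on_ivl a b h"
proof (rule AC_on_ivlI)
  fix e :: real assume "e > 0"
  define e' where "e' = e / (2 * (\<bar>C\<bar> + 1))"
  have "e' > 0" using \<open>e > 0\<close> by (simp add: e'_def)
  obtain d1 where "d1 > 0" and small_f:
    "\<And>n u v. nonoverlapping_subintervals a b n u v \<Longrightarrow> (\<Sum>i<n. v i - u i) < d1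
       \<Longrightarrow> (\<Sum>i<n. norm (f (v i) - f (u i))) < e'"
    using AC_on_ivlE[OF f \<open>e' > 0\<close>] by blast
  obtain d2 where "d2 > 0" and small_g:
    "\<And>n u v. nonoverlapping_subintervals a b n u v \<Longrightarrow> (\<Sum>i<n. v i - u i) < d2
       \<Longrightarrow> (\<Sum>i<n. norm (g (v i) - g (u i))) < e'"
    using AC_on_ivlE[OF g \<open>e' > 0\<close>] by blast
  show "\<exists>d>0. \<forall>n u v. nonoverlapping_subintervals a b n u v \<and> (\<Sum>i<n. v i - u i) < d
          \<longrightarrow> (\<Sum>i<n. norm (h (v i) - h (u i))) < e"
  proof (intro exI[of _ "min d1 d2"] conjI allI impI)
    show "min d1 d2 > 0" using \<open>d1 > 0\<close> \<open>d2 > 0\<close> by simp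
    fix n u v
    assume uv: "nonoverlapping_subintervals a b n u v \<and> (\<Sum>i<n. v i - u i) < min d1 d2"
    let ?F = "\<Sum>i<n. norm (f (v i) - f (u i))" and ?G = "\<Sum>i<n. norm (g (v i) - g (u i))"
    have "(\<Sum>i<n. norm (h (v i) - h (u i))) \<le> (\<Sum>i<n. \<bar>C\<bar> * (norm (f (v i) - f (u i)) + norm (g (v i) - g (u i))))"
    proof (rule sum_mono)
      fix i assume "i \<in> {..<n}"
      then have "norm (h (v i) - h (u i)) \<le> C * (norm (f (v i) - f (u i)) + norm (g (v i) - g (u i)))"
        using uv by (intro dominated) (auto simp: nonoverlapping_subintervals_def)
      also have "\<dots> \<le> \<bar>C\<bar> * (norm (f (v i) - f (u i)) + norm (g (v i) - g (u i)))"
        by (intro mult_right_mono) auto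
      finally show "norm (h (v i) - h (u i)) \<le> \<dots>" .
    qed
    also have "\<dots> = \<bar>C\<bar> * (?F + ?G)"
      by (simp add: sum_distrib_left sum.distrib distrib_left)
    also have "\<dots> \<le> \<bar>C\<bar> * (2 * e')"
      using uv small_f[of n u v] small_g[of n u v] by (intro mult_left_mono) auto
    also have "\<dots> < e"
      using \<open>e > 0\<close> by (simp add: e'_def field_simps)
    finally show "(\<Sum>i<n. norm (h (v i) - h (u i))) < e" .
  qed
qed

lemma AC_on_ivl_dominated:
  fixes f :: "real \<Rightarrow> 'a::real_normed_vector" and h :: "real \<Rightarrow> 'c::real_normed_vector"
  assumes "AC_on_ivl a b f"
    and "\<And>u v. a \<le> u \<Longrightarrow> u \<le> v \<Longrightarrow> v \<le> b \<Longrightarrow> norm (h v - h u) \<le> C * norm (f v - f u)"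
  shows "AC_on_ivl a b h"
proof (rule AC_on_ivl_dominated2[OF assms(1) assms(1), of _ "\<bar>C\<bar>"])
  fix u v assume "a \<le> u" "u \<le> v" "v \<le> b"
  then have "norm (h v - h u) \<le> \<bar>C\<bar> * norm (f v - f u)"
    using assms(2) abs_ge_self mult_right_mono norm_ge_zero order_trans by metis
  then show "norm (h v - h u) \<le> \<bar>C\<bar> * (norm (f v - f u) + norm (f v - f u))"
    by (smt (verit) abs_ge_zero mult_left_mono norm_ge_zero)
qed

lemma AC_on_ivl_ident: "AC_on_ivl a b (\<lambda>x. x)"
proof (rule AC_on_ivlI)
  fix e :: real assume "e > 0"
  then show "\<exists>d>0. \<forall>n u v. nonoverlapping_subintervals a b n u v \<and> (\<Sum>i<n. v i - u i) < d
          \<longrightarrow> (\<Sum>i<n. norm (v i - u i)) < e"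
    by (intro exI[of _ e]) (auto simp: nonoverlapping_subintervals_def)
qed

lemma AC_on_ivl_const: "AC_on_ivl a b (\<lambda>x. c)"
  by (rule AC_on_ivl_dominated[OF AC_on_ivl_ident, where C = 0]) simp

lemma AC_on_ivl_add:
  fixes f g :: "real \<Rightarrow> 'a::real_normed_vector"
  assumes "AC_on_ivl a b f" "AC_on_ivl a b g"
  shows "AC_on_ivl a b (\<lambda>x. f x + g x)"
  by (rule AC_on_ivl_dominated2[OF assms, of _ 1])
     (simp add: add_diff_add norm_triangle_ineq)

lemma AC_on_ivl_diff:
  fixes f g :: "real \<Rightarrow> 'a::real_normed_vector"
  assumes "AC_on_ivl a b f" "AC_on_ivl a b g"
  shows "AC_on_ivl a b (\<lambda>x. f x - g x)"
proof (rule AC_on_ivl_dominated2[OF assms, of _ 1])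
  fix u v :: real
  have "norm (f v - g v - (f u - g u)) = norm ((f v - f u) - (g v - g u))"
    by (simp add: algebra_simps)
  also have "\<dots> \<le> norm (f v - f u) + norm (g v - g u)"
    by (rule norm_triangle_ineq4)
  finally show "norm (f v - g v - (f u - g u)) \<le> 1 * (norm (f v - f u) + norm (g v - g u))"
    by simp
qed

lemma AC_on_ivl_bounded_linear:
  fixes f :: "real \<Rightarrow> 'a::real_normed_vector" and T :: "'a \<Rightarrow> 'b::real_normed_vector"
  assumes "AC_on_ivl a b f" "bounded_linear T"
  shows "AC_on_ivl a b (\<lambda>x. T (f x))"
proof -
  obtain K where K: "\<And>x. norm (T x) \<le> norm x * K"
    using bounded_linear.bounded[OF assms(2)] by blast
  show ?thesis
  proof (rule AC_on_ivl_dominated[OF assms(1), of _ K])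
    fix u v
    show "norm (T (f v) - T (f u)) \<le> K * norm (f v - f u)"
      using K[of "f v - f u"] by (simp add: linear_diff[OF bounded_linear.linear[OF assms(2)], symmetric] mult.commute)
  qed
qed

lemmas AC_on_ivl_of_real = AC_on_ivl_bounded_linear[OF _ bounded_linear_of_real]

lemmas AC_on_ivl_minus = AC_on_ivl_bounded_linear[OF _ bounded_linear_minus[OF bounded_linear_ident]]

lemma AC_on_ivl_bounded:
  fixes f :: "real \<Rightarrow> 'a::real_normed_vector"
  assumes "AC_on_ivl a b f"
  obtains M where "M > 0" "\<And>x. x \<in> {a..b} \<Longrightarrow> norm (f x) \<le> M"
proof -
  have "bounded (f ` {a..b})"
    by (intro compact_imp_bounded compact_continuous_image AC_on_ivl_continuous_on assms compact_Icc)
  then obtain M where "M > 0" "\<And>y. y \<in> f ` {a..b} \<Longrightarrow> norm y \<le> M"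
    by (auto simp: bounded_pos)
  then show ?thesis using that by blast
qed

lemma AC_on_ivl_bilinear:
  fixes f :: "real \<Rightarrow> 'a::real_normed_vector" and g :: "real \<Rightarrow> 'b::real_normed_vector"
  assumes f: "AC_on_ivl a b f" and g: "AC_on_ivl a b g" and B: "bounded_bilinear B"
  shows "AC_on_ivl a b (\<lambda>x. B (f x) (g x))"
proof -
  interpret bounded_bilinear B by (fact B)
  obtain K where K: "K > 0" "\<And>x y. norm (B x y) \<le> norm x * norm y * K"
    using pos_bounded by blast
  obtain M1 where M1: "M1 > 0" "\<And>x. x \<in> {a..b} \<Longrightarrow> norm (f x) \<le> M1"
    using AC_on_ivl_bounded[OF f] by blast
  obtain M2 where M2: "M2 > 0" "\<And>x. x \<in> {a..b} \<Longrightarrow> norm (g x) \<le> M2"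
    using AC_on_ivl_bounded[OF g] by blast
  show ?thesis
  proof (rule AC_on_ivl_dominated2[OF f g, of _ "(M1 + M2) * K"])
    fix u v assume uv: "a \<le> u" "u \<le> v" "v \<le> b"
    have "B (f v) (g v) - B (f u) (g u) = B (f v) (g v - g u) + B (f v - f u) (g u)"
      by (simp add: diff_left diff_right)
    then have "norm (B (f v) (g v) - B (f u) (g u))
        \<le> norm (B (f v) (g v - g u)) + norm (B (f v - f u) (g u))"
      by (simp add: norm_triangle_ineq)
    also have "\<dots> \<le> norm (f v) * norm (g v - g u) * K + norm (f v - f u) * norm (g u) * K"
      by (intro add_mono K(2))
    also have "\<dots> \<le> (M1 * norm (g v - g u) + norm (f v - f u) * M2) * K"
      using uv M1 M2 K by (simp add: distrib_right mult_right_mono mult_left_mono add_mono)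
    also have "\<dots> \<le> (M1 + M2) * K * (norm (f v - f u) + norm (g v - g u))"
      using M1 M2 K by (simp add: algebra_simps)
    finally show "norm (B (f v) (g v) - B (f u) (g u))
        \<le> (M1 + M2) * K * (norm (f v - f u) + norm (g v - g u))" .
  qed
qed

lemmas AC_on_ivl_mult = AC_on_ivl_bilinear[OF _ _ bounded_bilinear_mult]

lemma AC_on_ivl_inverse:
  fixes f :: "real \<Rightarrow> real"
  assumes f: "AC_on_ivl a b f" and pos: "\<And>x. x \<in> {a..b} \<Longrightarrow> f x > 0"
  shows "AC_on_ivl a b (\<lambda>x. 1 / f x)"
proof -
  obtain m where m: "m > 0" "\<And>x. x \<in> {a..b} \<Longrightarrow> m \<le> f x"
  proof (cases "a \<le> b")
    case True
    then obtain p where "p \<in> {a..b}" "\<And>x. x \<in> {a..b} \<Longrightarrow> f p \<le> f x"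
      using continuous_attains_inf[OF compact_Icc _ AC_on_ivl_continuous_on[OF f]] by auto
    then show thesis using that[of "f p"] pos by blast
  qed (use that[of 1] in auto)
  show ?thesis
  proof (rule AC_on_ivl_dominated[OF f, where C="1 / m^2"])
    fix u v assume "a \<le> u" "u \<le> v" "v \<le> b"
    then have fu: "m \<le> f u" and fv: "m \<le> f v" using m(2) by auto
    have "m^2 \<le> f u * f v"
      unfolding power2_eq_square using fu fv m(1) by (intro mult_mono) auto
    then have "\<bar>f v - f u\<bar> / (f u * f v) \<le> \<bar>f v - f u\<bar> / m^2"
      using m(1) fu fv by (intro divide_left_mono) auto
    moreover have "1 / f v - 1 / f u = (f u - f v) / (f u * f v)"
      using fu fv m(1) by (simp add: field_simps)
    ultimately show "norm (1 / f v - 1 / f u) \<le> 1 / m^2 * norm (f v - f u)"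
      using fu fv m(1) by (simp add: abs_minus_commute)
  qed
qed

lemma AC_on_ivl_exp_linear: "AC_on_ivl a b (\<lambda>t. exp (s * t))"
proof (rule AC_on_ivl_dominated[OF AC_on_ivl_ident, where C = "\<bar>s\<bar> * exp (\<bar>s\<bar> * (\<bar>a\<bar> + \<bar>b\<bar>))"])
  fix u v assume "a \<le> u" "u \<le> v" "v \<le> b"
  show "norm (exp (s * v) - exp (s * u)) \<le> \<bar>s\<bar> * exp (\<bar>s\<bar> * (\<bar>a\<bar> + \<bar>b\<bar>)) * norm (v - u)"
  proof (rule field_differentiable_bound[OF convex_real_interval(5)])
    fix t assume t: "t \<in> {a..b}"
    show "((\<lambda>t. exp (s * t)) has_field_derivative s * exp (s * t)) (at t within {a..b})"
      by (auto intro!: derivative_eq_intros)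
    have "\<bar>t\<bar> \<le> \<bar>a\<bar> + \<bar>b\<bar>" using t by auto
    then have "s * t \<le> \<bar>s\<bar> * (\<bar>a\<bar> + \<bar>b\<bar>)"
      using abs_ge_self[of "s * t"] mult_left_mono[of "\<bar>t\<bar>" "\<bar>a\<bar> + \<bar>b\<bar>" "\<bar>s\<bar>"]
      by (auto simp: abs_mult)
    then show "norm (s * exp (s * t)) \<le> \<bar>s\<bar> * exp (\<bar>s\<bar> * (\<bar>a\<bar> + \<bar>b\<bar>))"
      by (simp add: abs_mult mult_left_mono)
  qed (use \<open>a \<le> u\<close> \<open>u \<le> v\<close> \<open>v \<le> b\<close> in auto)
qed

subsection \<open>Luzin's property (N) and its consequences\<close>

lemma interior_disjoint_cboxes_negligible_Int:
  fixes a b c d :: "'a::euclidean_space"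
  assumes "interior (cbox a b) \<inter> interior (cbox c d) = {}"
  shows "negligible (cbox a b \<inter> cbox c d)"
proof (rule negligible_subset)
  show "negligible ((cbox a b - box a b) \<union> (cbox c d - box c d))"
    by (intro negligible_Un negligible_frontier_interval)
  show "cbox a b \<inter> cbox c d \<subseteq> (cbox a b - box a b) \<union> (cbox c d - box c d)"
    using assms by auto
qed

lemma interior_disjoint_ivls_le:
  fixes c d c' d' :: real
  assumes "c < d" "c' < d'" "interior {c..d} \<inter> interior {c'..d'} = {}"
  shows "d \<le> c' \<or> d' \<le> c"
proof (rule ccontr)
  assume "\<not> (d \<le> c' \<or> d' \<le> c)"
  then have "(max c c' + min d d') / 2 \<in> interior {c..d} \<inter> interior {c'..d'}"
    using assms(1,2) by (auto simp: max_def min_def split: if_splits)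
  then show False using assms(3) by blast
qed

lemma measure_Union_interior_disjoint_cboxes:
  fixes I :: "'a::euclidean_space set set"
  assumes "finite I" and cbox: "\<And>K. K \<in> I \<Longrightarrow> \<exists>c d. K = cbox c d"
    and disjoint: "pairwise (\<lambda>K L. interior K \<inter> interior L = {}) I"
  shows "measure lebesgue (\<Union>I) = (\<Sum>K\<in>I. measure lebesgue K)"
proof (rule measure_negligible_finite_Union[OF \<open>finite I\<close>])
  show "K \<in> lmeasurable" if "K \<in> I" for K
    using cbox[OF that] by auto
  show "pairwise (\<lambda>K L. negligible (K \<inter> L)) I"
  proof (rule pairwiseI)
    fix K L assume "K \<in> I" "L \<in> I" "K \<noteq> L"
    then have "interior K \<inter> interior L = {}"
      using disjoint unfolding pairwise_def by blast
    moreover obtain c d c' d' where "K = cbox c d" "L = cbox c' d'"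
      using cbox \<open>K \<in> I\<close> \<open>L \<in> I\<close> by metis
    ultimately show "negligible (K \<inter> L)"
      by (simp add: interior_disjoint_cboxes_negligible_Int)
  qed
qed

lemma continuous_image_interval_measure:
  fixes f :: "real \<Rightarrow> real"
  assumes "continuous_on {c..d} f" "c \<le> d"
  obtains u v where "c \<le> u" "u \<le> v" "v \<le> d" "f ` {c..d} \<in> lmeasurable"
    "measure lebesgue (f ` {c..d}) = \<bar>f v - f u\<bar>"
proof -
  obtain m M where image: "f ` {c..d} = {m..M}" "m \<le> M"
    using continuous_image_closed_interval[OF assms(2,1)] by blast
  then have "m \<in> f ` {c..d}" "M \<in> f ` {c..d}"
    by auto
  then obtain p q where "p \<in> {c..d}" "q \<in> {c..d}" "f p = m" "f q = M"
    by blast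
  have "measure lebesgue (f ` {c..d}) = \<bar>f (max p q) - f (min p q)\<bar>"
    using image \<open>f p = m\<close> \<open>f q = M\<close> by (cases "p \<le> q") (simp_all add: max_def min_def)
  moreover have "c \<le> min p q" "min p q \<le> max p q" "max p q \<le> d"
    using \<open>p \<in> {c..d}\<close> \<open>q \<in> {c..d}\<close> by auto
  ultimately show thesis
    using image by (intro that) auto
qed

lemma AC_on_ivl_small_images:
  fixes f :: "real \<Rightarrow> real"
  assumes f: "AC_on_ivl a b f" and "e > 0"
  obtains \<delta> where "\<delta> > 0"
    "\<And>I c d. finite I \<Longrightarrow> (\<And>K. K \<in> I \<Longrightarrow> K = {c K..d K} \<and> c K < d K \<and> a \<le> c K \<and> d K \<le> b)
       \<Longrightarrow> pairwise (\<lambda>K L. interior K \<inter> interior L = {}) I \<Longrightarrow> measure lebesgue (\<Union>I) < \<delta>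
       \<Longrightarrow> measure lebesgue (\<Union>K\<in>I. f ` K) < e"
proof -
  obtain \<delta> where "\<delta> > 0" and small:
    "\<And>n u v. nonoverlapping_subintervals a b n u v \<Longrightarrow> (\<Sum>i<n. v i - u i) < \<delta>
       \<Longrightarrow> (\<Sum>i<n. norm (f (v i) - f (u i))) < e"
    using AC_on_ivlE[OF f \<open>e > 0\<close>] by blast
  show thesis
  proof (rule that[OF \<open>\<delta> > 0\<close>])
    fix I and c d :: "real set \<Rightarrow> real"
    assume "finite I" and K: "\<And>K. K \<in> I \<Longrightarrow> K = {c K..d K} \<and> c K < d K \<and> a \<le> c K \<and> d K \<le> b"
      and disjoint: "pairwise (\<lambda>K L. interior K \<inter> interior L = {}) I"
      and "measure lebesgue (\<Union>I) < \<delta>"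
    have ivl: "K = {c K..d K}" "c K < d K" if "K \<in> I" for K
      using K[OF that] by auto
    have "\<exists>u v. c K \<le> u \<and> u \<le> v \<and> v \<le> d K \<and> f ` K \<in> lmeasurable
        \<and> measure lebesgue (f ` K) = \<bar>f v - f u\<bar>" if "K \<in> I" for K
    proof -
      have "a \<le> c K" "d K \<le> b" "c K \<le> d K" using K[OF that] by auto
      then have "continuous_on {c K..d K} f"
        by (intro continuous_on_subset[OF AC_on_ivl_continuous_on[OF f]]) auto
      then obtain u v where "c K \<le> u" "u \<le> v" "v \<le> d K" "f ` {c K..d K} \<in> lmeasurable"
          "measure lebesgue (f ` {c K..d K}) = \<bar>f v - f u\<bar>"
        using \<open>c K \<le> d K\<close> by (rule continuous_image_interval_measure)
      then show ?thesis
        unfolding ivl(1)[OF that, symmetric] by blast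
    qed
    then obtain u v where uv: "\<And>K. K \<in> I \<Longrightarrow> c K \<le> u K \<and> u K \<le> v K \<and> v K \<le> d K"
      and image: "\<And>K. K \<in> I \<Longrightarrow> f ` K \<in> lmeasurable \<and> measure lebesgue (f ` K) = \<bar>f (v K) - f (u K)\<bar>"
      by metis
    have apart: "v K \<le> u L \<or> v L \<le> u K" if "K \<in> I" "L \<in> I" "K \<noteq> L" for K L
    proof -
      have "interior K \<inter> interior L = {}"
        using disjoint that unfolding pairwise_def by blast
      then have "interior {c K..d K} \<inter> interior {c L..d L} = {}"
        by (simp only: ivl(1)[OF that(1), symmetric] ivl(1)[OF that(2), symmetric])
      then have "d K \<le> c L \<or> d L \<le> c K"
        using interior_disjoint_ivls_le ivl(2) that by blast
      then show ?thesis
        using uv[OF that(1)] uv[OF that(2)] by linarith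
    qed
    have inside: "a \<le> u K \<and> u K \<le> v K \<and> v K \<le> b" if "K \<in> I" for K
      using uv[OF that] K[OF that] by linarith
    obtain h where h: "bij_betw h {..<card I} I"
      "nonoverlapping_subintervals a b (card I) (u \<circ> h) (v \<circ> h)"
      by (rule nonoverlapping_subintervals_enumerate[OF \<open>finite I\<close> inside apart])
    have "(\<Sum>K\<in>I. v K - u K) \<le> (\<Sum>K\<in>I. measure lebesgue K)"
    proof (rule sum_mono)
      fix K assume "K \<in> I"
      have "measure lebesgue {c K..d K} = d K - c K"
        using ivl(2)[OF \<open>K \<in> I\<close>] by simp
      then have "measure lebesgue K = d K - c K"
        by (simp only: ivl(1)[OF \<open>K \<in> I\<close>, symmetric])
      then show "v K - u K \<le> measure lebesgue K"
        using uv[OF \<open>K \<in> I\<close>] by linarith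
    qed
    also have "\<dots> = measure lebesgue (\<Union>I)"
    proof (rule measure_Union_interior_disjoint_cboxes[symmetric, OF \<open>finite I\<close> _ disjoint])
      fix K assume "K \<in> I"
      then have "K = cbox (c K) (d K)"
        unfolding cbox_interval by (rule ivl(1))
      then show "\<exists>c d. K = cbox c d" by blast
    qed
    finally have "(\<Sum>i<card I. v (h i) - u (h i)) < \<delta>"
      using \<open>measure lebesgue (\<Union>I) < \<delta>\<close> sum.reindex_bij_betw[OF h(1), of "\<lambda>K. v K - u K"] by simp
    then have "(\<Sum>K\<in>I. \<bar>f (v K) - f (u K)\<bar>) < e"
      using small[OF h(2)] sum.reindex_bij_betw[OF h(1), of "\<lambda>K. \<bar>f (v K) - f (u K)\<bar>"] by simp
    moreover have "measure lebesgue (\<Union>K\<in>I. f ` K) \<le> (\<Sum>K\<in>I. measure lebesgue (f ` K))"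
      using image by (intro measure_UNION_le[OF \<open>finite I\<close>]) auto
    moreover have "(\<Sum>K\<in>I. measure lebesgue (f ` K)) = (\<Sum>K\<in>I. \<bar>f (v K) - f (u K)\<bar>)"
      using image by (intro sum.cong) auto
    ultimately show "measure lebesgue (\<Union>K\<in>I. f ` K) < e"
      by linarith
  qed
qed

lemma negligible_interval_cover:
  fixes N :: "real set"
  assumes N: "negligible N" "N \<subseteq> {a..b}" and "a < b" "\<delta> > 0"
  obtains \<D> c d where "countable \<D>" "N \<subseteq> \<Union>\<D>"
    "\<And>K. K \<in> \<D> \<Longrightarrow> K = {c K..d K} \<and> c K < d K \<and> a \<le> c K \<and> d K \<le> b"
    "pairwise (\<lambda>K L. interior K \<inter> interior L = {}) \<D>"
    "\<And>I. I \<subseteq> \<D> \<Longrightarrow> finite I \<Longrightarrow> measure lebesgue (\<Union>I) < \<delta>"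
proof -
  have "N \<in> lmeasurable" "N \<subseteq> cbox a b" "\<delta> / 2 > 0"
    using N negligible_imp_measurable \<open>\<delta> > 0\<close> by auto
  then obtain \<D> where \<D>: "countable \<D>"
      "\<And>K. K \<in> \<D> \<Longrightarrow> K \<subseteq> cbox a b \<and> K \<noteq> {} \<and> (\<exists>c d. K = cbox c d)"
      "pairwise (\<lambda>A B. interior A \<inter> interior B = {}) \<D>"
      "\<And>c d. cbox c d \<in> \<D> \<Longrightarrow> \<exists>n. \<forall>i \<in> Basis. d \<bullet> i - c \<bullet> i = (b \<bullet> i - a \<bullet> i)/2^n"
      "\<And>K. \<lbrakk>K \<in> \<D>; box a b \<noteq> {}\<rbrakk> \<Longrightarrow> interior K \<noteq> {}"
      "N \<subseteq> \<Union>\<D>" "\<Union>\<D> \<in> lmeasurable" "measure lebesgue (\<Union>\<D>) \<le> measure lebesgue N + \<delta> / 2"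
    by (rule measurable_outer_intervals_bounded) (rule that)
  have "\<forall>K\<in>\<D>. \<exists>c d. K = {c..d} \<and> c < d"
  proof
    fix K assume "K \<in> \<D>"
    then obtain c d where "K = {c..d}" using \<D>(2) by fastforce
    moreover have "interior K \<noteq> {}" using \<D>(5) \<open>K \<in> \<D>\<close> \<open>a < b\<close> by simp
    ultimately show "\<exists>c d. K = {c..d} \<and> c < d" by auto
  qed
  then obtain c d where ivl: "\<And>K. K \<in> \<D> \<Longrightarrow> K = {c K..d K} \<and> c K < d K"
    by metis
  have inside: "a \<le> c K \<and> d K \<le> b" if "K \<in> \<D>" for K
  proof -
    have "c K \<in> K" "d K \<in> K"
      using ivl[OF that] by (metis atLeastAtMost_iff less_imp_le order_refl)+
    then show ?thesis using \<D>(2)[OF that] by auto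
  qed
  have small: "measure lebesgue (\<Union>I) < \<delta>" if "I \<subseteq> \<D>" "finite I" for I
  proof -
    have "measure lebesgue (\<Union>I) \<le> measure lebesgue (\<Union>\<D>)"
    proof (rule measure_mono_fmeasurable)
      have "K \<in> sets lebesgue" if "K \<in> \<D>" for K
        using \<D>(2)[OF that] by (intro fmeasurableD) auto
      then show "\<Union>I \<in> sets lebesgue"
        using that by (intro sets.finite_Union) auto
    qed (use that \<D>(7) in auto)
    also have "\<dots> < \<delta>"
      using \<D>(8) negligible_imp_measure0[OF N(1)] \<open>\<delta> > 0\<close> by simp
    finally show ?thesis .
  qed
  show thesis
  proof (rule that[OF \<D>(1) \<D>(6) _ \<D>(3) small])
    fix K assume "K \<in> \<D>"
    then show "K = {c K..d K} \<and> c K < d K \<and> a \<le> c K \<and> d K \<le> b"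
      using ivl[OF \<open>K \<in> \<D>\<close>] inside[OF \<open>K \<in> \<D>\<close>] by (elim conjE) (intro conjI)
  qed
qed

lemma AC_on_ivl_negligible_image:
  fixes f :: "real \<Rightarrow> real"
  assumes f: "AC_on_ivl a b f" and N: "negligible N" "N \<subseteq> {a..b}"
  shows "negligible (f ` N)"
proof (cases "a < b")
  case False
  then have "finite N" using N(2) finite_subset[of N "{a}"] by fastforce
  then show ?thesis by (simp add: negligible_finite)
next
  case True
  show ?thesis unfolding negligible_outer_le
  proof (intro allI impI)
    fix e :: real assume "e > 0"
    show "\<exists>T. f ` N \<subseteq> T \<and> T \<in> lmeasurable \<and> measure lebesgue T \<le> e"
    proof (rule AC_on_ivl_small_images[OF f \<open>e > 0\<close>])
      fix \<delta> :: real
      assume "\<delta> > 0" and small: "\<And>I c d. finite I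
        \<Longrightarrow> (\<And>K. K \<in> I \<Longrightarrow> K = {c K..d K} \<and> c K < d K \<and> a \<le> c K \<and> d K \<le> b)
        \<Longrightarrow> pairwise (\<lambda>K L. interior K \<inter> interior L = {}) I \<Longrightarrow> measure lebesgue (\<Union>I) < \<delta>
        \<Longrightarrow> measure lebesgue (\<Union>K\<in>I. f ` K) < e"
      show ?thesis
      proof (rule negligible_interval_cover[OF N \<open>a < b\<close> \<open>\<delta> > 0\<close>])
        fix \<D> and c d :: "real set \<Rightarrow> real"
        assume "countable \<D>" "N \<subseteq> \<Union>\<D>"
          and ivl: "\<And>K. K \<in> \<D> \<Longrightarrow> K = {c K..d K} \<and> c K < d K \<and> a \<le> c K \<and> d K \<le> b"
          and disjoint: "pairwise (\<lambda>K L. interior K \<inter> interior L = {}) \<D>"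
          and cover_small: "\<And>I. I \<subseteq> \<D> \<Longrightarrow> finite I \<Longrightarrow> measure lebesgue (\<Union>I) < \<delta>"
        have bound: "measure lebesgue (\<Union>K\<in>I. f ` K) \<le> e" if "I \<subseteq> \<D>" "finite I" for I
          using small[OF \<open>finite I\<close>, of c d] ivl pairwise_subset[OF disjoint]
            cover_small[OF that] that by (meson less_imp_le subsetD)
        have image: "f ` K \<in> lmeasurable" if "K \<in> \<D>" for K
        proof (rule lmeasurable_compact)
          have "a \<le> c K" "d K \<le> b"
            using ivl[OF that] by simp_all
          then have "compact {c K..d K}" "{c K..d K} \<subseteq> {a..b}"
            by auto
          then have "compact K" "K \<subseteq> {a..b}"
            by (simp_all only: ivl[OF that, THEN conjunct1, symmetric])
          then show "compact (f ` K)"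
            by (intro compact_continuous_image continuous_on_subset[OF AC_on_ivl_continuous_on[OF f]])
        qed
        have "(\<Union>K\<in>\<D>. f ` K) \<in> lmeasurable"
          by (rule fmeasurable_UN_bound[OF \<open>countable \<D>\<close> image bound])
        moreover have "measure lebesgue (\<Union>K\<in>\<D>. f ` K) \<le> e"
          by (rule measure_UN_bound[OF \<open>countable \<D>\<close> image bound])
        moreover have "f ` N \<subseteq> (\<Union>K\<in>\<D>. f ` K)"
          using \<open>N \<subseteq> \<Union>\<D>\<close> by blast
        ultimately show ?thesis
          by blast
      qed
    qed
  qed
qed

lemma last_downcrossing:
  fixes g :: "real \<Rightarrow> real"
  assumes cont: "continuous_on {a..b} g" and "a \<le> b" "g b < y" "y < g a"
  obtains x where "a < x" "x < b" "g x = y"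
    "\<And>d. (g has_real_derivative d) (at x) \<Longrightarrow> d \<le> 0"
proof -
  define S where "S = {t \<in> {a..b}. g t = y}"
  have "S \<noteq> {}"
    using IVT2'[of g b y a, OF _ _ \<open>a \<le> b\<close> cont] assms by (auto simp: S_def)
  moreover have "closed S"
    unfolding S_def by (rule continuous_closed_preimage_constant[OF cont]) auto
  moreover have "bdd_above S"
    unfolding S_def by (rule bdd_aboveI[of _ b]) auto
  ultimately have "Sup S \<in> S" and above: "\<And>t. t \<in> S \<Longrightarrow> t \<le> Sup S"
    by (auto intro: closed_contains_Sup cSup_upper)
  define x where "x = Sup S"
  have "x \<in> S" and last: "\<And>t. t \<in> S \<Longrightarrow> t \<le> x"
    using \<open>Sup S \<in> S\<close> above by (simp_all add: x_def)
  moreover have "x \<noteq> a" "x \<noteq> b"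
    using \<open>x \<in> S\<close> assms by (auto simp: S_def)
  ultimately have x: "x \<in> S" "a < x" "x < b"
    by (auto simp: S_def)
  moreover have "d \<le> 0" if deriv: "(g has_real_derivative d) (at x)" for d
  proof (rule ccontr)
    assume "\<not> d \<le> 0"
    then obtain \<delta> where "\<delta> > 0" and increase: "\<And>h. h > 0 \<Longrightarrow> h < \<delta> \<Longrightarrow> g x < g (x + h)"
      using DERIV_pos_inc_right[OF deriv] by auto
    define t where "t = x + min (\<delta> / 2) ((b - x) / 2)"
    have "x < t" using \<open>\<delta> > 0\<close> \<open>x < b\<close> by (simp add: t_def)
    moreover have "t < b"
      using \<open>x < b\<close> unfolding t_def min_def by (auto simp: field_simps)
    moreover have "g x < g t"
      unfolding t_def using \<open>\<delta> > 0\<close> \<open>x < b\<close> by (intro increase) auto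
    ultimately obtain s where "t \<le> s" "s \<le> b" "g s = y"
      using IVT2'[of g b y t] continuous_on_subset[OF cont, of "{t..b}"] x assms
      by (fastforce simp: S_def)
    then have "s \<in> S" using \<open>x < t\<close> x by (auto simp: S_def)
    then show False using last[of s] \<open>x < t\<close> \<open>t \<le> s\<close> by linarith
  qed
  ultimately show thesis using that by (auto simp: S_def)
qed

lemma AC_on_ivl_mono:
  fixes f :: "real \<Rightarrow> real"
  assumes f: "AC_on_ivl a b f" and "a \<le> b" and N: "negligible N"
    and deriv: "\<And>x. a < x \<Longrightarrow> x < b \<Longrightarrow> x \<notin> N \<Longrightarrow> \<exists>d\<ge>0. (f has_real_derivative d) (at x)"
  shows "f a \<le> f b"
proof (rule ccontr)
  assume "\<not> f a \<le> f b"
  then have "a < b" using \<open>a \<le> b\<close> by (cases "a = b") auto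
  define \<epsilon> where "\<epsilon> = (f a - f b) / (2 * (b - a))"
  define g where "g x = f x + \<epsilon> * x" for x
  have "\<epsilon> > 0" using \<open>\<not> f a \<le> f b\<close> \<open>a < b\<close> by (simp add: \<epsilon>_def)
  have "g a - g b = (f a - f b) - \<epsilon> * (b - a)"
    by (simp add: g_def algebra_simps)
  also have "\<dots> = (f a - f b) / 2"
    using \<open>a < b\<close> by (simp add: \<epsilon>_def field_simps)
  finally have "g b < g a"
    using \<open>\<not> f a \<le> f b\<close> by (simp add: field_simps)
  have g: "AC_on_ivl a b g"
    unfolding g_def by (intro AC_on_ivl_add f AC_on_ivl_mult AC_on_ivl_const AC_on_ivl_ident)
  \<comment> \<open>At the last point where g crosses a level in (g b, g a), g' > 0 is impossible, so f'
    cannot exist there with f' \<ge> 0: the point lies in N.\<close>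
  have "{g b<..<g a} \<subseteq> g ` (N \<inter> {a..b})"
  proof
    fix y assume "y \<in> {g b<..<g a}"
    then obtain x where x: "a < x" "x < b" "g x = y"
      and no_rise: "\<And>d. (g has_real_derivative d) (at x) \<Longrightarrow> d \<le> 0"
      using last_downcrossing[OF AC_on_ivl_continuous_on[OF g] \<open>a \<le> b\<close>] by auto
    have "x \<in> N"
    proof (rule ccontr)
      assume "x \<notin> N"
      then obtain d where "d \<ge> 0" "(f has_real_derivative d) (at x)"
        using deriv x by blast
      then have "(g has_real_derivative d + \<epsilon>) (at x)"
        unfolding g_def by (auto intro!: derivative_eq_intros)
      then show False using no_rise \<open>d \<ge> 0\<close> \<open>\<epsilon> > 0\<close> by fastforce
    qed
    then show "y \<in> g ` (N \<inter> {a..b})" using x by auto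
  qed
  moreover have "negligible (g ` (N \<inter> {a..b}))"
    using N by (intro AC_on_ivl_negligible_image[OF g]) (auto intro: negligible_subset)
  ultimately have "negligible {g b<..<g a}" by (rule negligible_subset[rotated])
  then have "box (g b) (g a) = {}"
    by (metis box_real(1) negligible_interval(2))
  then show False
    using \<open>g b < g a\<close> by simp
qed

lemma AC_on_ivl_constant:
  fixes f :: "real \<Rightarrow> 'a::euclidean_space"
  assumes f: "AC_on_ivl a b f" and "a \<le> b" and N: "negligible N"
    and deriv: "\<And>x. a < x \<Longrightarrow> x < b \<Longrightarrow> x \<notin> N \<Longrightarrow> (f has_vector_derivative 0) (at x)"
  shows "f a = f b"
proof (rule euclidean_eqI)
  fix i :: 'a assume "i \<in> Basis"
  have f_i: "AC_on_ivl a b (\<lambda>x. f x \<bullet> i)" "AC_on_ivl a b (\<lambda>x. - (f x \<bullet> i))"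
    using AC_on_ivl_bounded_linear[OF f bounded_linear_inner_left] by (auto intro: AC_on_ivl_minus)
  have "((\<lambda>x. f x \<bullet> i) has_real_derivative 0) (at x)"
    if "a < x" "x < b" "x \<notin> N" for x
    using bounded_linear.has_vector_derivative[OF bounded_linear_inner_left deriv[OF that]]
    by (simp add: has_real_derivative_iff_has_vector_derivative)
  then have "f a \<bullet> i \<le> f b \<bullet> i" "- (f a \<bullet> i) \<le> - (f b \<bullet> i)"
    by (intro AC_on_ivl_mono[OF f_i(1) \<open>a \<le> b\<close> N] AC_on_ivl_mono[OF f_i(2) \<open>a \<le> b\<close> N];
        fastforce intro: DERIV_minus[where D = 0, simplified])+
  then show "f a \<bullet> i = f b \<bullet> i" by linarith
qed

lemma AC_on_ivl_exp_mult_mono: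
  fixes n :: "real \<Rightarrow> real"
  assumes n: "AC_on_ivl a b n" and "a \<le> b" and N: "negligible N"
    and deriv: "\<And>x. x \<notin> N \<Longrightarrow> \<exists>d. (n has_real_derivative d) (at x) \<and> 0 \<le> s * n x + d"
  shows "exp (s * a) * n a \<le> exp (s * b) * n b"
proof (rule AC_on_ivl_mono[OF AC_on_ivl_mult[OF AC_on_ivl_exp_linear n] \<open>a \<le> b\<close> N])
  fix x assume "x \<notin> N"
  then obtain d where "(n has_real_derivative d) (at x)" "0 \<le> s * n x + d"
    using deriv by blast
  then have "((\<lambda>t. exp (s * t) * n t) has_real_derivative exp (s * x) * (s * n x + d)) (at x)"
    by (auto intro!: derivative_eq_intros simp: algebra_simps)
  then show "\<exists>d\<ge>0. ((\<lambda>t. exp (s * t) * n t) has_real_derivative d) (at x)"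
    using \<open>0 \<le> s * n x + d\<close> by (intro exI[of _ "exp (s * x) * (s * n x + d)"]) auto
qed

lemma AE_lborel_negligibleE:
  assumes "AE x in lborel. P x"
  obtains N where "negligible N" "\<And>x. x \<notin> N \<Longrightarrow> P x"
proof -
  obtain N where "N \<in> null_sets lborel" "\<And>x. x \<notin> N \<Longrightarrow> P x"
    using AE_E3[OF assms] by auto
  then show thesis
    using that negligible_iff_null_sets null_sets_completionI by blast
qed

lemma AC_locD: "AC_loc f \<Longrightarrow> AC_on_ivl a b f"
  by (simp add: AC_loc_def)

lemma AC_loc_continuous_on:
  assumes "AC_loc f"
  shows "continuous_on UNIV f"
proof (rule continuous_at_imp_continuous_on, intro ballI)
  fix x :: real
  have "continuous_on {x - 1..x + 1} f"
    using AC_on_ivl_continuous_on[OF AC_locD[OF assms]] .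
  then show "isCont f x"
    by (rule continuous_on_interior) simp
qed

lemma AC_loc_borel_measurable: "AC_loc f \<Longrightarrow> f \<in> borel_measurable lborel"
  unfolding measurable_lborel2 by (intro borel_measurable_continuous_onI AC_loc_continuous_on)

lemma AC_loc_bounded_linear: "AC_loc f \<Longrightarrow> bounded_linear T \<Longrightarrow> AC_loc (\<lambda>x. T (f x))"
  by (simp add: AC_loc_def AC_on_ivl_bounded_linear)

lemma AC_loc_constant:
  fixes f :: "real \<Rightarrow> 'a::euclidean_space"
  assumes f: "AC_loc f" and deriv: "AE x in lborel. (f has_vector_derivative 0) (at x)"
  shows "f x = f y"
proof -
  obtain N where "negligible N" "\<And>x. x \<notin> N \<Longrightarrow> (f has_vector_derivative 0) (at x)"
    using AE_lborel_negligibleE[OF deriv] by blast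
  then have "f a = f b" if "a \<le> b" for a b
    using AC_on_ivl_constant[OF AC_locD[OF f] that] by blast
  then show ?thesis by (metis linorder_le_cases)
qed

lemma AC_loc_vanishing_gronwall:
  fixes n :: "real \<Rightarrow> real"
  assumes n: "AC_loc n" and nonneg: "\<And>x. n x \<ge> 0"
    and deriv: "AE x in lborel. \<exists>d. (n has_real_derivative d) (at x) \<and> \<bar>d\<bar> \<le> k * n x"
    and "n x0 = 0"
  shows "n x = 0"
proof -
  obtain N where N: "negligible N"
    and deriv': "\<And>x. x \<notin> N \<Longrightarrow> \<exists>d. (n has_real_derivative d) (at x) \<and> \<bar>d\<bar> \<le> k * n x"
    using AE_lborel_negligibleE[OF deriv] by blast
  have AC: "AC_on_ivl a b n" "AC_on_ivl a b (\<lambda>x. - n x)" for a b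
    using n by (auto simp: AC_loc_def intro: AC_on_ivl_minus)
  show ?thesis
  proof (cases "x \<le> x0")
    case True
    have "exp (k * x) * n x \<le> exp (k * x0) * n x0"
    proof (rule AC_on_ivl_exp_mult_mono[OF AC(1) True N])
      fix t assume "t \<notin> N"
      then show "\<exists>d. (n has_real_derivative d) (at t) \<and> 0 \<le> k * n t + d"
        using deriv' by fastforce
    qed
    then show ?thesis
      using \<open>n x0 = 0\<close> nonneg[of x] by (simp add: mult_le_0_iff)
  next
    case False
    have "exp (- k * x0) * - n x0 \<le> exp (- k * x) * - n x"
    proof (rule AC_on_ivl_exp_mult_mono[OF AC(2)])
      fix t assume "t \<notin> N"
      then obtain d where "(n has_real_derivative d) (at t)" "\<bar>d\<bar> \<le> k * n t"
        using deriv' by blast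
      then show "\<exists>d. ((\<lambda>x. - n x) has_real_derivative d) (at t) \<and> 0 \<le> - k * - n t + d"
        by (intro exI[of _ "- d"]) (auto intro: DERIV_minus)
    qed (use False N in auto)
    then show ?thesis
      using \<open>n x0 = 0\<close> nonneg[of x] by (simp add: mult_le_0_iff)
  qed
qed

lemma integrable_lborel_const_eq_0:
  fixes c :: "'b::{banach, second_countable_topology}"
  assumes "integrable lborel (\<lambda>x::'a::euclidean_space. c)"
  shows "c = 0"
proof (rule ccontr)
  assume "c \<noteq> 0"
  then have "(\<integral>\<^sup>+x. ennreal (norm c) \<partial>(lborel :: 'a measure)) = \<infinity>"
    by (simp add: ennreal_mult_top)
  then show False using assms unfolding integrable_iff_bounded by simp
qed

lemma not_AE_lborel_False: "\<not> (AE x in (lborel :: 'a::euclidean_space measure). False)"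
proof
  assume "AE x in (lborel :: 'a measure). False"
  then have "ae_filter (lborel :: 'a measure) = bot" by (simp add: eventually_False)
  then show False by (simp add: ae_filter_eq_bot_iff)
qed

section \<open>The Dirac system\<close>

lemma norm_cscale: "norm (cscale c v) = cmod c * norm v"
  by (cases v) (simp add: cscale_def norm_Pair norm_mult power_mult_distrib real_sqrt_mult
      flip: distrib_left)

lemma bounded_linear_cscale: "bounded_linear (cscale c)"
  unfolding cscale_def by (auto intro!: bounded_linear_intros)

lemma bounded_bilinear_cscale: "bounded_bilinear cscale"
proof
  show "\<exists>K. \<forall>c v. norm (cscale c v) \<le> norm c * norm v * K"
    by (intro exI[of _ 1]) (simp add: norm_cscale)
qed (simp_all add: cscale_def algebra_simps scaleR_conv_of_real)

lemma bounded_linear_Kop: "bounded_linear Kop"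
  unfolding Kop_def
  by (intro bounded_linear_Pair bounded_linear_minus bounded_linear_compose[OF bounded_linear_cnj]
      bounded_linear_fst bounded_linear_snd)

lemma norm_Kop: "norm (Kop v) = norm v"
  by (cases v) (simp add: Kop_def norm_Pair add.commute)

lemma Kop_eq_0_iff: "Kop v = 0 \<longleftrightarrow> v = 0"
  by (metis norm_Kop norm_eq_zero)

lemma L2_bounded_linear:
  assumes "L2 F" "bounded_linear T" "\<And>v. norm (T v) = c * norm v"
  shows "L2 (\<lambda>x. T (F x))"
proof -
  have "(\<lambda>x. T (F x)) \<in> borel_measurable lborel"
    using assms(1,2) by (auto simp: L2_def intro: borel_measurable_continuous_onI
      measurable_compose[OF _ borel_measurable_continuous_onI] linear_continuous_on)
  then show ?thesis
    using assms(1) by (simp add: L2_def assms(3) power_mult_distrib)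
qed

lemma L2_cscale: "L2 F \<Longrightarrow> L2 (\<lambda>x. cscale c (F x))"
  by (rule L2_bounded_linear[OF _ bounded_linear_cscale norm_cscale])

lemma L2_Kop: "L2 F \<Longrightarrow> L2 (\<lambda>x. Kop (F x))"
  by (rule L2_bounded_linear[OF _ bounded_linear_Kop, of _ 1]) (simp_all add: norm_Kop)

text \<open>The eigenvalue equation M(r) F = z F, solved for F' at a point where r takes the value p.\<close>
definition dirac_field :: "complex \<Rightarrow> complex \<Rightarrow> complex \<times> complex \<Rightarrow> complex \<times> complex" where
  "dirac_field p z v = (p * snd v - \<i> * z * fst v, \<i> * z * snd v - cnj p * fst v)"

definition dirac_solution :: "(real \<Rightarrow> complex) \<Rightarrow> complex \<Rightarrow> (real \<Rightarrow> complex \<times> complex) \<Rightarrow> bool" where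
  "dirac_solution r z F \<longleftrightarrow> AC_loc F \<and>
     (AE x in lborel. (F has_vector_derivative dirac_field (r x) z (F x)) (at x))"

lemma Mop_eq_cscale_iff: "Mop r F x d = cscale z (F x) \<longleftrightarrow> d = dirac_field (r x) z (F x)"
proof -
  have i_mult: "\<i> * a = b \<longleftrightarrow> a = - \<i> * b" for a b :: complex
    by (auto simp: algebra_simps)
  obtain d1 d2 where d: "d = (d1, d2)" by (cases d)
  have "Mop r F x d = cscale z (F x) \<longleftrightarrow>
      \<i> * (d1 - r x * snd (F x)) = z * fst (F x) \<and> \<i> * (- cnj (r x) * fst (F x) - d2) = z * snd (F x)"
    by (simp add: Mop_def cscale_def d)
  also have "\<dots> \<longleftrightarrow> d1 - r x * snd (F x) = - \<i> * (z * fst (F x)) \<and>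
      - cnj (r x) * fst (F x) - d2 = - \<i> * (z * snd (F x))"
    by (simp only: i_mult)
  also have "\<dots> \<longleftrightarrow> d = dirac_field (r x) z (F x)"
    by (auto simp: d dirac_field_def algebra_simps)
  finally show ?thesis .
qed

lemma D_graph_eigen_iff:
  "D_graph r F (\<lambda>x. cscale z (F x)) \<longleftrightarrow> L2 F \<and> dirac_solution r z F"
  unfolding D_graph_def dirac_solution_def Mop_eq_cscale_iff
  by (auto simp del: split_paired_Ex intro: L2_cscale)

lemma wave_function_imp_dirac_solution: "wave_function q z \<Psi> \<Longrightarrow> dirac_solution q z \<Psi>"
  unfolding wave_function_def dirac_solution_def dirac_field_def
  by (auto elim!: eventually_mono simp: algebra_simps simp del: split_paired_Ex)

lemma Kop_dirac_field: "Kop (dirac_field p z v) = dirac_field p (cnj z) (Kop v)"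
  by (simp add: Kop_def dirac_field_def algebra_simps)

lemma dirac_solution_Kop:
  assumes "dirac_solution r z F"
  shows "dirac_solution r (cnj z) (\<lambda>x. Kop (F x))"
  using assms unfolding dirac_solution_def
  by (auto simp flip: Kop_dirac_field elim!: eventually_mono
      intro: AC_loc_bounded_linear[OF _ bounded_linear_Kop]
        bounded_linear.has_vector_derivative[OF bounded_linear_Kop])

lemma dirac_field_diff_cscale:
  "dirac_field p z (w - cscale c v) = dirac_field p z w - cscale c (dirac_field p z v)"
  by (simp add: dirac_field_def cscale_def algebra_simps)

lemma dirac_solution_diff_cscale:
  assumes F: "dirac_solution r z F" and G: "dirac_solution r z G"
  shows "dirac_solution r z (\<lambda>x. G x - cscale c (F x))"
proof -
  have "AC_on_ivl a b (\<lambda>x. G x - cscale c (F x))" for a b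
    using F G unfolding dirac_solution_def AC_loc_def
    by (intro AC_on_ivl_diff AC_on_ivl_bounded_linear[OF _ bounded_linear_cscale]) auto
  then have "AC_loc (\<lambda>x. G x - cscale c (F x))"
    by (simp add: AC_loc_def)
  moreover have "AE x in lborel. ((\<lambda>x. G x - cscale c (F x)) has_vector_derivative
      dirac_field (r x) z (G x - cscale c (F x))) (at x)"
  proof -
    have "AE x in lborel. (F has_vector_derivative dirac_field (r x) z (F x)) (at x) \<and>
        (G has_vector_derivative dirac_field (r x) z (G x)) (at x)"
      using F G by (simp add: dirac_solution_def eventually_conj_iff)
    then show ?thesis
      unfolding dirac_field_diff_cscale
    proof (rule eventually_mono)
      fix x
      assume "(F has_vector_derivative dirac_field (r x) z (F x)) (at x) \<and>
        (G has_vector_derivative dirac_field (r x) z (G x)) (at x)"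
      then show "((\<lambda>x. G x - cscale c (F x)) has_vector_derivative
        dirac_field (r x) z (G x) - cscale c (dirac_field (r x) z (F x))) (at x)"
        by (intro has_vector_derivative_diff bounded_linear.has_vector_derivative[OF bounded_linear_cscale]) auto
    qed
  qed
  ultimately show ?thesis by (simp add: dirac_solution_def)
qed

lemma inner_dirac_field:
  "inner v (dirac_field p z v) = Im z * ((cmod (fst v))\<^sup>2 - (cmod (snd v))\<^sup>2)"
  unfolding cmod_power2
  by (cases v) (simp add: dirac_field_def inner_complex_def algebra_simps power2_eq_square)

lemma has_real_derivative_norm_sq_dirac:
  assumes "(F has_vector_derivative dirac_field p z (F x)) (at x)"
  shows "((\<lambda>t. (norm (F t))\<^sup>2) has_real_derivative
           2 * Im z * ((cmod (fst (F x)))\<^sup>2 - (cmod (snd (F x)))\<^sup>2)) (at x)"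
proof -
  have "((\<lambda>t. inner (F t) (F t)) has_vector_derivative
          inner (F x) (dirac_field p z (F x)) + inner (dirac_field p z (F x)) (F x)) (at x)"
    by (rule bounded_bilinear.has_vector_derivative[OF bounded_bilinear_inner assms assms])
  moreover have "(\<lambda>t. (norm (F t))\<^sup>2) = (\<lambda>t. inner (F t) (F t))"
    by (simp add: power2_norm_eq_inner)
  ultimately show ?thesis
    by (simp add: has_real_derivative_iff_has_vector_derivative
        inner_commute[of "dirac_field p z (F x)"] inner_dirac_field mult.assoc)
qed

lemma dirac_solution_vanishing:
  assumes F: "dirac_solution r z F" and "F x0 = 0"
  shows "F x = 0"
proof -
  have "(norm (F x))\<^sup>2 = 0"
  proof (rule AC_loc_vanishing_gronwall[where n = "\<lambda>x. (norm (F x))\<^sup>2" and k = "2 * \<bar>Im z\<bar>"])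
    show "AC_loc (\<lambda>x. (norm (F x))\<^sup>2)"
      using F unfolding dirac_solution_def AC_loc_def power2_norm_eq_inner
      by (blast intro: AC_on_ivl_bilinear[OF _ _ bounded_bilinear_inner])
    have bound: "\<bar>2 * Im z * ((cmod (fst v))\<^sup>2 - (cmod (snd v))\<^sup>2)\<bar> \<le> 2 * \<bar>Im z\<bar> * (norm v)\<^sup>2"
      for v :: "complex \<times> complex"
      by (cases v) (simp add: norm_Pair abs_mult mult_left_mono abs_diff_le_iff)
    from F have "AE x in lborel. (F has_vector_derivative dirac_field (r x) z (F x)) (at x)"
      by (simp add: dirac_solution_def)
    then show "AE x in lborel. \<exists>d. ((\<lambda>x. (norm (F x))\<^sup>2) has_real_derivative d) (at x)
                 \<and> \<bar>d\<bar> \<le> 2 * \<bar>Im z\<bar> * (norm (F x))\<^sup>2"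
    proof (rule eventually_mono)
      fix x assume "(F has_vector_derivative dirac_field (r x) z (F x)) (at x)"
      then show "\<exists>d. ((\<lambda>x. (norm (F x))\<^sup>2) has_real_derivative d) (at x)
                 \<and> \<bar>d\<bar> \<le> 2 * \<bar>Im z\<bar> * (norm (F x))\<^sup>2"
        using bound[of "F x"] by (blast intro: has_real_derivative_norm_sq_dirac)
    qed
  qed (use \<open>F x0 = 0\<close> in auto)
  then show ?thesis by simp
qed

definition wronskian :: "complex \<times> complex \<Rightarrow> complex \<times> complex \<Rightarrow> complex" where
  "wronskian v w = fst v * snd w - snd v * fst w"

lemma norm_wronskian_le: "norm (wronskian v w) \<le> 2 * norm v * norm w"
proof -
  have components: "norm (fst u) \<le> norm u" "norm (snd u) \<le> norm u" for u :: "complex \<times> complex"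
    by (metis prod.collapse norm_fst_le, metis prod.collapse norm_snd_le)
  have "norm (wronskian v w) \<le> cmod (fst v) * cmod (snd w) + cmod (snd v) * cmod (fst w)"
    unfolding wronskian_def by (metis norm_mult norm_triangle_ineq4)
  also have "\<dots> \<le> norm v * norm w + norm v * norm w"
    by (intro add_mono mult_mono components) auto
  finally show ?thesis by simp
qed

lemma bounded_bilinear_wronskian: "bounded_bilinear wronskian"
proof
  show "\<exists>K. \<forall>v w. norm (wronskian v w) \<le> norm v * norm w * K"
    using norm_wronskian_le by (metis mult.commute mult.left_commute)
qed (simp_all add: wronskian_def algebra_simps scaleR_conv_of_real)

lemma wronskian_dirac_field:
  "wronskian (dirac_field p z v) w + wronskian v (dirac_field p z w) = 0"
  by (simp add: wronskian_def dirac_field_def algebra_simps)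

lemma dirac_solution_wronskian_constant:
  assumes F: "dirac_solution r z F" and G: "dirac_solution r z G"
  shows "wronskian (F x) (G x) = wronskian (F y) (G y)"
proof (rule AC_loc_constant[where f = "\<lambda>t. wronskian (F t) (G t)"])
  show "AC_loc (\<lambda>t. wronskian (F t) (G t))"
    using F G unfolding dirac_solution_def AC_loc_def
    by (blast intro: AC_on_ivl_bilinear[OF _ _ bounded_bilinear_wronskian])
  have "AE t in lborel. (F has_vector_derivative dirac_field (r t) z (F t)) (at t) \<and>
      (G has_vector_derivative dirac_field (r t) z (G t)) (at t)"
    using F G by (simp add: dirac_solution_def eventually_conj_iff)
  then show "AE t in lborel. ((\<lambda>t. wronskian (F t) (G t)) has_vector_derivative 0) (at t)"
  proof (rule eventually_mono)
    fix t
    assume "(F has_vector_derivative dirac_field (r t) z (F t)) (at t) \<and>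
      (G has_vector_derivative dirac_field (r t) z (G t)) (at t)"
    then have "((\<lambda>t. wronskian (F t) (G t)) has_vector_derivative
        wronskian (F t) (dirac_field (r t) z (G t)) + wronskian (dirac_field (r t) z (F t)) (G t)) (at t)"
      by (intro bounded_bilinear.has_vector_derivative[OF bounded_bilinear_wronskian]) auto
    then show "((\<lambda>t. wronskian (F t) (G t)) has_vector_derivative 0) (at t)"
      using wronskian_dirac_field[of "r t" z "F t" "G t"] by (metis add.commute)
  qed
qed

lemma L2_dirac_solutions_wronskian_eq_0:
  assumes "L2 F" "L2 G" "dirac_solution r z F" "dirac_solution r z G"
  shows "wronskian (F x) (G x) = 0"
proof (rule integrable_lborel_const_eq_0)
  have integrable: "integrable lborel (\<lambda>t. (norm (F t))\<^sup>2 + (norm (G t))\<^sup>2)"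
    using assms(1,2) by (simp add: L2_def)
  have bound: "norm (wronskian (F x) (G x)) \<le> (norm (F t))\<^sup>2 + (norm (G t))\<^sup>2" for t
  proof -
    have "2 * norm (F t) * norm (G t) \<le> (norm (F t))\<^sup>2 + (norm (G t))\<^sup>2"
      using sum_squares_bound[of "norm (F t)" "norm (G t)"] by (simp add: power2_eq_square)
    then show ?thesis
      using norm_wronskian_le[of "F t" "G t"]
        dirac_solution_wronskian_constant[OF assms(3,4), of x t] by simp
  qed
  show "integrable lborel (\<lambda>t::real. wronskian (F x) (G x))"
    by (rule Bochner_Integration.integrable_bound[OF integrable]) (auto intro!: bound)
qed

lemma wronskian_eq_0_imp_cscale:
  assumes "wronskian v w = 0" "v \<noteq> 0"
  obtains c where "w = cscale c v"
proof (cases "fst v = 0")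
  case True
  then have "snd v \<noteq> 0" "fst w = 0"
    using assms by (auto simp: wronskian_def prod_eq_iff)
  then show thesis
    using True by (intro that[of "snd w / snd v"]) (simp add: cscale_def prod_eq_iff)
next
  case False
  then show thesis
    using assms(1) by (intro that[of "fst w / fst v"])
      (simp add: cscale_def prod_eq_iff wronskian_def field_simps)
qed

lemma L2_dirac_solutions_proportional:
  assumes F: "L2 F" "dirac_solution r z F" and G: "L2 G" "dirac_solution r z G"
    and "F x0 \<noteq> 0"
  obtains c where "\<And>x. G x = cscale c (F x)"
proof -
  obtain c where c: "G x0 = cscale c (F x0)"
    using wronskian_eq_0_imp_cscale[OF L2_dirac_solutions_wronskian_eq_0[OF F(1) G(1) F(2) G(2)]]
      \<open>F x0 \<noteq> 0\<close> by blast
  have "dirac_solution r z (\<lambda>x. G x - cscale c (F x))"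
    by (rule dirac_solution_diff_cscale[OF F(2) G(2)])
  moreover have "G x0 - cscale c (F x0) = 0"
    using c by simp
  ultimately have "G x - cscale c (F x) = 0" for x
    by (rule dirac_solution_vanishing)
  then show thesis by (intro that) simp
qed

lemma simple_eigenvalue_withI:
  assumes F: "L2 F" "dirac_solution r z F" and "F x0 \<noteq> 0"
  shows "simple_eigenvalue_with r z F"
  unfolding simple_eigenvalue_with_def eigenfunction_def
proof (intro conjI allI impI)
  show "D_graph r F (\<lambda>x. cscale z (F x))"
    using F by (simp add: D_graph_eigen_iff)
  have "F x \<noteq> 0" for x
    using dirac_solution_vanishing[OF F(2)] \<open>F x0 \<noteq> 0\<close> by blast
  then show "\<not> (AE x in lborel. F x = 0)"
    using not_AE_lborel_False by (metis (mono_tags, lifting) eventually_mono)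
  fix G assume "D_graph r G (\<lambda>x. cscale z (G x))"
  then obtain c where "\<And>x. G x = cscale c (F x)"
    using L2_dirac_solutions_proportional[OF F _ _ \<open>F x0 \<noteq> 0\<close>] by (auto simp: D_graph_eigen_iff)
  then show "\<exists>c. AE x in lborel. G x = cscale c (F x)" by auto
qed

section \<open>The Darboux transformation\<close>

definition darboux_potential :: "(real \<Rightarrow> complex) \<Rightarrow> complex \<Rightarrow> (real \<Rightarrow> complex \<times> complex) \<Rightarrow> real \<Rightarrow> complex" where
  "darboux_potential q z \<Psi> x =
     q x + complex_of_real (4 * Im z) * fst (\<Psi> x) * cnj (snd (\<Psi> x)) / complex_of_real ((norm (\<Psi> x))\<^sup>2)"

definition darboux_eigenfunction :: "complex \<Rightarrow> (real \<Rightarrow> complex \<times> complex) \<Rightarrow> real \<Rightarrow> complex \<times> complex" where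
  "darboux_eigenfunction z \<Psi> x = cscale (complex_of_real (Im z / (norm (\<Psi> x))\<^sup>2)) (Kop (\<Psi> x))"

text \<open>The left-hand side is the product rule for (Im z / |v|^2) K v, using
  (|v|^2)' = 2 Im z (|v1|^2 - |v2|^2).\<close>
lemma darboux_field_identity:
  fixes v :: "complex \<times> complex"
  assumes "v \<noteq> 0"
  defines "n \<equiv> (norm v)\<^sup>2"
  shows "cscale (Im z / n) (Kop (dirac_field p z v))
      + cscale (- Im z * (2 * Im z * ((cmod (fst v))\<^sup>2 - (cmod (snd v))\<^sup>2)) / n\<^sup>2) (Kop v)
    = dirac_field (p + 4 * Im z * fst v * cnj (snd v) / n) z (cscale (Im z / n) (Kop v))"
proof -
  obtain a b where v: "v = (a, b)" by (cases v)
  have n: "n = (Re a)\<^sup>2 + (Im a)\<^sup>2 + (Re b)\<^sup>2 + (Im b)\<^sup>2"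
    by (simp add: n_def v norm_Pair cmod_power2)
  have "n \<noteq> 0" using assms(1) by (simp add: n_def)
  show ?thesis
    using \<open>n \<noteq> 0\<close>
    unfolding v prod_eq_iff complex_eq_iff cscale_def Kop_def dirac_field_def cmod_power2
    by (simp add: field_simps power2_eq_square) (simp add: n algebra_simps power2_eq_square)
qed

lemma has_vector_derivative_darboux_eigenfunction:
  assumes \<Psi>': "(\<Psi> has_vector_derivative dirac_field (q x) z (\<Psi> x)) (at x)" and "\<Psi> x \<noteq> 0"
  shows "(darboux_eigenfunction z \<Psi> has_vector_derivative
           dirac_field (darboux_potential q z \<Psi> x) z (darboux_eigenfunction z \<Psi> x)) (at x)"
proof -
  define n' where "n' = 2 * Im z * ((cmod (fst (\<Psi> x)))\<^sup>2 - (cmod (snd (\<Psi> x)))\<^sup>2)"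
  have "((\<lambda>t. Im z / (norm (\<Psi> t))\<^sup>2) has_real_derivative - Im z * n' / ((norm (\<Psi> x))\<^sup>2)\<^sup>2) (at x)"
    using DERIV_divide[OF DERIV_const has_real_derivative_norm_sq_dirac[OF \<Psi>'], of "Im z"] \<open>\<Psi> x \<noteq> 0\<close>
    by (simp add: n'_def power2_eq_square)
  then have "(darboux_eigenfunction z \<Psi> has_vector_derivative
      cscale (complex_of_real (Im z / (norm (\<Psi> x))\<^sup>2)) (Kop (dirac_field (q x) z (\<Psi> x)))
      + cscale (complex_of_real (- Im z * n' / ((norm (\<Psi> x))\<^sup>2)\<^sup>2)) (Kop (\<Psi> x))) (at x)"
    unfolding darboux_eigenfunction_def[abs_def]
    by (intro bounded_bilinear.has_vector_derivative[OF bounded_bilinear_cscale]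
        has_vector_derivative_of_real bounded_linear.has_vector_derivative[OF bounded_linear_Kop] \<Psi>')
  then show ?thesis
    unfolding n'_def darboux_field_identity[OF \<open>\<Psi> x \<noteq> 0\<close>]
    by (simp add: darboux_potential_def darboux_eigenfunction_def)
qed

lemma AC_loc_darboux_eigenfunction:
  assumes "AC_loc \<Psi>" "\<And>x. \<Psi> x \<noteq> 0"
  shows "AC_loc (darboux_eigenfunction z \<Psi>)"
  unfolding AC_loc_def darboux_eigenfunction_def[abs_def]
proof (intro allI)
  fix a b
  have \<Psi>: "AC_on_ivl a b \<Psi>" using assms(1) by (rule AC_locD)
  have "AC_on_ivl a b (\<lambda>x. inner (\<Psi> x) (\<Psi> x))"
    by (rule AC_on_ivl_bilinear[OF \<Psi> \<Psi> bounded_bilinear_inner])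
  then have "AC_on_ivl a b (\<lambda>x. 1 / (norm (\<Psi> x))\<^sup>2)"
    using assms(2) by (intro AC_on_ivl_inverse) (simp_all add: power2_norm_eq_inner)
  then have "AC_on_ivl a b (\<lambda>x. complex_of_real (Im z * (1 / (norm (\<Psi> x))\<^sup>2)))"
    by (intro AC_on_ivl_of_real AC_on_ivl_mult AC_on_ivl_const)
  then show "AC_on_ivl a b (\<lambda>x. cscale (complex_of_real (Im z / (norm (\<Psi> x))\<^sup>2)) (Kop (\<Psi> x)))"
    by (intro AC_on_ivl_bilinear[OF _ _ bounded_bilinear_cscale]
        AC_on_ivl_bounded_linear[OF \<Psi> bounded_linear_Kop]) simp
qed

lemma dirac_solution_darboux:
  assumes \<Psi>: "dirac_solution q z \<Psi>" and nonzero: "\<And>x. \<Psi> x \<noteq> 0"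
  shows "dirac_solution (darboux_potential q z \<Psi>) z (darboux_eigenfunction z \<Psi>)"
  using \<Psi> AC_loc_darboux_eigenfunction[OF _ nonzero]
    has_vector_derivative_darboux_eigenfunction[OF _ nonzero]
  unfolding dirac_solution_def by (auto elim!: eventually_mono)

lemma darboux_eigenfunction_nonzero:
  assumes "Im z \<noteq> 0" "\<Psi> x \<noteq> 0"
  shows "darboux_eigenfunction z \<Psi> x \<noteq> 0"
proof -
  have "norm (darboux_eigenfunction z \<Psi> x) = \<bar>Im z\<bar> / norm (\<Psi> x)"
    using assms(2) unfolding darboux_eigenfunction_def norm_cscale norm_Kop norm_of_real
    by (simp add: power2_eq_square)
  then show ?thesis using assms by auto
qed

lemma L2_darboux_eigenfunction:
  assumes "AC_loc \<Psi>" "\<And>x. \<Psi> x \<noteq> 0"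
    and finite: "(\<integral>\<^sup>+ x. ennreal (1 / (norm (\<Psi> x))\<^sup>2) \<partial>lborel) < \<infinity>"
  shows "L2 (darboux_eigenfunction z \<Psi>)"
proof -
  have "(\<lambda>x. 1 / (norm (\<Psi> x))\<^sup>2) \<in> borel_measurable lborel"
    using AC_loc_borel_measurable[OF assms(1)] by measurable
  then have "integrable lborel (\<lambda>x. 1 / (norm (\<Psi> x))\<^sup>2)"
    using finite by (intro integrableI_nonneg) auto
  then have "integrable lborel (\<lambda>x. (Im z)\<^sup>2 * (1 / (norm (\<Psi> x))\<^sup>2))"
    by (rule integrable_mult_right)
  moreover have "(norm (darboux_eigenfunction z \<Psi> x))\<^sup>2 = (Im z)\<^sup>2 * (1 / (norm (\<Psi> x))\<^sup>2)" for x
    using assms(2)[of x] unfolding darboux_eigenfunction_def norm_cscale norm_Kop norm_of_real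
    by (simp add: field_simps power2_eq_square)
  ultimately show ?thesis
    using AC_loc_borel_measurable[OF AC_loc_darboux_eigenfunction[OF assms(1,2)]]
    by (simp add: L2_def)
qed

theorem theorem4p5:
  fixes q :: "real \<Rightarrow> complex" and z1 :: complex and \<Psi> :: "real \<Rightarrow> complex \<times> complex"
    and q1 :: "real \<Rightarrow> complex" and \<Phi> :: "real \<Rightarrow> complex \<times> complex"
  assumes "L1_loc q"
    and "Im z1 \<noteq> 0"
    and "wave_function q z1 \<Psi>"
    and "(\<integral>\<^sup>+ x. ennreal (1 / (norm (\<Psi> x))\<^sup>2) \<partial>lborel) < \<infinity>"
  defines "q1 \<equiv> (\<lambda>x. q x + 4 * Im z1 * fst (\<Psi> x) * cnj (snd (\<Psi> x)) / (norm (\<Psi> x))\<^sup>2)"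
    and "\<Phi> \<equiv> (\<lambda>x. cscale (Im z1 / (norm (\<Psi> x))\<^sup>2) (Kop (\<Psi> x)))"
  shows "simple_eigenvalue_with q1 z1 \<Phi>
       \<and> simple_eigenvalue_with q1 (cnj z1) (\<lambda>x. Kop (\<Phi> x))
       \<and> (\<forall>x. Kop (\<Phi> x) = cscale (- Im z1 / (norm (\<Psi> x))\<^sup>2) (\<Psi> x))"
proof -
  have \<Psi>: "dirac_solution q z1 \<Psi>"
    using assms(3) by (rule wave_function_imp_dirac_solution)
  obtain x0 where "\<Psi> x0 \<noteq> 0"
    using assms(3) by (auto simp: wave_function_def)
  then have \<Psi>_nonzero: "\<Psi> x \<noteq> 0" for x
    using dirac_solution_vanishing[OF \<Psi>] by blast
  have q1: "q1 = darboux_potential q z1 \<Psi>" and \<Phi>: "\<Phi> = darboux_eigenfunction z1 \<Psi>"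
    by (simp_all add: q1_def \<Phi>_def darboux_potential_def darboux_eigenfunction_def fun_eq_iff)
  have \<Phi>_solution: "dirac_solution q1 z1 \<Phi>"
    unfolding q1 \<Phi> using \<Psi> \<Psi>_nonzero by (rule dirac_solution_darboux)
  have \<Phi>_L2: "L2 \<Phi>"
    unfolding \<Phi> using \<Psi> \<Psi>_nonzero assms(4)
    by (intro L2_darboux_eigenfunction) (auto simp: dirac_solution_def)
  have "\<Phi> x0 \<noteq> 0"
    unfolding \<Phi> by (rule darboux_eigenfunction_nonzero[OF assms(2) \<Psi>_nonzero])
  then have "simple_eigenvalue_with q1 z1 \<Phi>" "simple_eigenvalue_with q1 (cnj z1) (\<lambda>x. Kop (\<Phi> x))"
    using simple_eigenvalue_withI[OF \<Phi>_L2 \<Phi>_solution]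
      simple_eigenvalue_withI[OF L2_Kop[OF \<Phi>_L2] dirac_solution_Kop[OF \<Phi>_solution]]
    by (auto simp: Kop_eq_0_iff)
  moreover have "Kop (\<Phi> x) = cscale (- Im z1 / (norm (\<Psi> x))\<^sup>2) (\<Psi> x)" for x
    by (simp add: \<Phi>_def cscale_def Kop_def)
  ultimately show ?thesis by blast
qed

end
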